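(* (1) The model admits a unique single-strain ($I_1$)-infection equilibrium $E_1=(\bar S,\bar V_1,\bar I_1,0)$ with $\bar S,\bar V_1,\bar I_1>0$ if and only if $\mathcal{R}_1>1$. (2) The model admits a single-strain ($I_2$)-infection equilibrium $E_2=(\tilde S,\tilde V_1,0,\tilde I_2)$ with $\tilde S,\tilde V_1,\tilde I_2>0$ if and only if $\mathcal{R}_2>1$. Moreover: - if $-\alpha_2r\mu-\alpha_2\mu^2+k\Lambda r<0$, then $E_2$ is unique; - if $-\alpha_2r\mu-\alpha_2\mu^2+k\Lambda r>0$, then the model has at most one single-strain ($I_2$)-infection equilibrium with $\tilde I_2$ in the interval $\left[\frac{-r\alpha_2-\alpha_2\mu+\sqrt{r\alpha_2(r\alpha_2+\alpha_2\mu+k\Lambda)}}{\alpha_2k},\frac{\Lambda}{\alpha_2}\right]$.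
   Context: The model is $\dot S=\Lambda-F_1(S,I_1)-F_2(S,I_2)-\lambda S$, $\dot V_1=rS-(\mu+kI_2)V_1$, $\dot I_1=F_1(S,I_1)-\alpha_1I_1$, $\dot I_2=F_2(S,I_2)+kI_2V_1-\alpha_2I_2$ on $\mathbb{R}^4_+$. The constants $\Lambda,\mu,r,k,\gamma_1,\gamma_2>0$ and $v_1,v_2\ge0$; $\lambda=r+\mu$ and $\alpha_i=\gamma_i+v_i+\mu$. For $i=1,2$ the incidence functions satisfy: - (H1) $F_i(S,I_i)=I_if_i(S,I_i)$ with $F_i,f_i\in C^2(\mathbb{R}^2_+,\mathbb{R}_+)$ and $F_i(0,I_i)=F_i(S,0)=0$; - (H2) $\partial f_i/\partial S>0$ and $\partial f_i/\partial I_i\le0$ on $\mathbb{R}^2_+$; - (H3) $\lim_{I_i\to0^+}F_i(S,I_i)/I_i$ exists and is positive for $S>0$. Let $S^0=\Lambda/\lambda$, $V_1^0=r\Lambda/(\mu\lambda)$ and $\sigma_i=\frac{\partial F_i}{\partial I_i}(S^0,0)$. Set $\mathcal{R}_1=\sigma_1/\alpha_1$ and $\mathcal{R}_2=\sigma_2/\alpha_2+\frac{kr\Lambda}{\alpha_2\mu\lambda}$. *)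

theory Defs
  imports "HOL-Analysis.Analysis"
begin

definition quadrant :: "(real \<times> real) set" where
  "quadrant = {p. fst p \<ge> 0 \<and> snd p \<ge> 0}"

definition C2_on :: "(real \<times> real \<Rightarrow> real) \<Rightarrow> (real \<times> real) set \<Rightarrow> bool" where
  "C2_on g A \<longleftrightarrow>
     (\<exists>(Dg :: real \<times> real \<Rightarrow> ((real \<times> real) \<Rightarrow>\<^sub>L real))
        (D2g :: real \<times> real \<Rightarrow> ((real \<times> real) \<Rightarrow>\<^sub>L ((real \<times> real) \<Rightarrow>\<^sub>L real))).
        (\<forall>x\<in>A. (g has_derivative blinfun_apply (Dg x)) (at x within A)) \<and>
        (\<forall>x\<in>A. (Dg has_derivative blinfun_apply (D2g x)) (at x within A)) \<and>
        continuous_on A D2g)"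

definition incidence_hyps :: "(real \<Rightarrow> real \<Rightarrow> real) \<Rightarrow> (real \<Rightarrow> real \<Rightarrow> real) \<Rightarrow> bool" where
  "incidence_hyps F f \<longleftrightarrow>
     \<comment> \<open>(H1)\<close>
     (\<forall>S\<ge>0. \<forall>I\<ge>0. F S I = I * f S I) \<and>
     C2_on (\<lambda>p. F (fst p) (snd p)) quadrant \<and> C2_on (\<lambda>p. f (fst p) (snd p)) quadrant \<and>
     (\<forall>S\<ge>0. \<forall>I\<ge>0. F S I \<ge> 0 \<and> f S I \<ge> 0) \<and>
     (\<forall>I\<ge>0. F 0 I = 0) \<and> (\<forall>S\<ge>0. F S 0 = 0) \<and>
     \<comment> \<open>(H2): partial derivatives (one-sided on the boundary)\<close>
     (\<forall>S\<ge>0. \<forall>I\<ge>0. \<exists>d>0. ((\<lambda>s. f s I) has_real_derivative d) (at S within {0..})) \<and>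
     (\<forall>S\<ge>0. \<forall>I\<ge>0. \<exists>d\<le>0. ((\<lambda>i. f S i) has_real_derivative d) (at I within {0..})) \<and>
     \<comment> \<open>(H3)\<close>
     (\<forall>S>0. \<exists>L>0. ((\<lambda>I. F S I / I) \<longlongrightarrow> L) (at_right 0))"

definition equilibrium ::
  "real \<Rightarrow> real \<Rightarrow> real \<Rightarrow> real \<Rightarrow> real \<Rightarrow> real \<Rightarrow> real \<Rightarrow> real \<Rightarrow>
   (real \<Rightarrow> real \<Rightarrow> real) \<Rightarrow> (real \<Rightarrow> real \<Rightarrow> real) \<Rightarrow>
   real \<Rightarrow> real \<Rightarrow> real \<Rightarrow> real \<Rightarrow> bool" where
  "equilibrium \<Lambda> \<mu> r k \<gamma>1 \<gamma>2 v1 v2 F1 F2 S V I1 I2 \<longleftrightarrow>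
     S \<ge> 0 \<and> V \<ge> 0 \<and> I1 \<ge> 0 \<and> I2 \<ge> 0 \<and>
     \<Lambda> - F1 S I1 - F2 S I2 - (r + \<mu>) * S = 0 \<and>
     r * S - (\<mu> + k * I2) * V = 0 \<and>
     F1 S I1 - (\<gamma>1 + v1 + \<mu>) * I1 = 0 \<and>
     F2 S I2 + k * I2 * V - (\<gamma>2 + v2 + \<mu>) * I2 = 0"

definition E1_equilibrium where
  "E1_equilibrium \<Lambda> \<mu> r k \<gamma>1 \<gamma>2 v1 v2 F1 F2 S V I1 \<longleftrightarrow>
     S > 0 \<and> V > 0 \<and> I1 > 0 \<and> equilibrium \<Lambda> \<mu> r k \<gamma>1 \<gamma>2 v1 v2 F1 F2 S V I1 0"

definition E2_equilibrium where
  "E2_equilibrium \<Lambda> \<mu> r k \<gamma>1 \<gamma>2 v1 v2 F1 F2 S V I2 \<longleftrightarrow>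
     S > 0 \<and> V > 0 \<and> I2 > 0 \<and> equilibrium \<Lambda> \<mu> r k \<gamma>1 \<gamma>2 v1 v2 F1 F2 S V 0 I2"

end

theory Submission
  imports Defs
begin

text \<open>
  Eliminating \<open>V\<close> and the balance equation for \<open>S\<close> turns a single-strain equilibrium into
  a scalar equation \<open>G\<^sub>i I = \<alpha>\<^sub>i\<close> on \<open>0 < I < \<Lambda> / \<alpha>\<^sub>i\<close>, with \<open>S = S\<^sub>i I\<close>. Each \<open>G\<^sub>i\<close> is
  continuous, vanishes at \<open>\<Lambda> / \<alpha>\<^sub>i\<close>, and \<open>G\<^sub>1 0 = \<sigma>\<^sub>1\<close>, \<open>G\<^sub>2 0 = \<sigma>\<^sub>2 + k r S\<^sup>0 / \<mu>\<close>, so the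
  intermediate value theorem gives an equilibrium as soon as \<open>\<R>\<^sub>i > 1\<close>. Conversely, at an
  equilibrium \<open>S \<le> S\<^sup>0\<close>, and (H2) gives \<open>\<alpha>\<^sub>i < G\<^sub>i 0\<close>.

  Uniqueness comes from strict monotonicity of \<open>G\<^sub>i\<close>. For strain 1 the line
  \<open>S\<^sub>1 I = (\<Lambda> - \<alpha>\<^sub>1 I) / (r + \<mu>)\<close> decreases, hence so does \<open>G\<^sub>1\<close> by (H2). For strain 2,
  \<open>S\<^sub>2 I = (\<Lambda> - \<alpha>\<^sub>2 I)(\<mu> + k I) / (\<mu> (r + \<mu> + k I))\<close> is unimodal, and \<open>G\<^sub>2\<close> decreases strictly
  past the peak of \<open>S\<^sub>2\<close>. If \<open>-\<alpha>\<^sub>2 r \<mu> - \<alpha>\<^sub>2 \<mu>\<^sup>2 + k \<Lambda> r < 0\<close> the peak lies at negative \<open>I\<close>;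
  in general it lies exactly at the lower end of the interval in part (2).
\<close>

lemma continuous_on_if_deriv_within:
  fixes g :: "real \<Rightarrow> real"
  assumes "\<And>x. x \<in> A \<Longrightarrow> \<exists>d. (g has_real_derivative d) (at x within A)"
  shows "continuous_on A g"
  unfolding continuous_on_eq_continuous_within using assms by (blast intro: DERIV_continuous)

lemma has_real_derivative_at_if_within_atLeast:
  fixes g :: "real \<Rightarrow> real"
  assumes "(g has_real_derivative d) (at x within {a..})" "a < x"
  shows "(g has_real_derivative d) (at x)"
proof -
  have "(g has_real_derivative d) (at x within {a<..})"
    using assms(1) by (rule has_field_derivative_subset) auto
  moreover have "at x within {a<..} = at x"
    using assms(2) by (intro at_within_open) auto
  ultimately show ?thesis by simp
qed

lemma strict_mono_on_atLeast_if_deriv_pos: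
  fixes g :: "real \<Rightarrow> real"
  assumes deriv: "\<And>x. a \<le> x \<Longrightarrow> \<exists>d>0. (g has_real_derivative d) (at x within {a..})"
  shows "strict_mono_on {a..} g"
proof (rule strict_mono_onI)
  fix x y assume "x \<in> {a..}" "y \<in> {a..}" "x < y"
  have "continuous_on {a..} g"
    by (rule continuous_on_if_deriv_within) (use deriv in auto)
  show "g x < g y"
  proof (rule DERIV_pos_imp_increasing_open[OF \<open>x < y\<close>])
    fix z assume "x < z" "z < y"
    then have "a < z" using \<open>x \<in> {a..}\<close> by simp
    then show "\<exists>d. (g has_real_derivative d) (at z) \<and> d > 0"
      using deriv[of z] has_real_derivative_at_if_within_atLeast by fastforce
  next
    show "continuous_on {x..y} g"
      by (rule continuous_on_subset[OF \<open>continuous_on {a..} g\<close>]) (use \<open>x \<in> {a..}\<close> in auto)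
  qed
qed

lemma antimono_on_atLeast_if_deriv_nonpos:
  fixes g :: "real \<Rightarrow> real"
  assumes deriv: "\<And>x. a \<le> x \<Longrightarrow> \<exists>d\<le>0. (g has_real_derivative d) (at x within {a..})"
  shows "antimono_on {a..} g"
proof (rule monotone_onI)
  fix x y assume "x \<in> {a..}" "y \<in> {a..}" "x \<le> y"
  have "continuous_on {a..} g"
    by (rule continuous_on_if_deriv_within) (use deriv in auto)
  show "g y \<le> g x"
  proof (rule DERIV_nonpos_imp_decreasing_open[OF \<open>x \<le> y\<close>])
    fix z assume "x < z" "z < y"
    then have "a < z" using \<open>x \<in> {a..}\<close> by simp
    then show "\<exists>d. (g has_real_derivative d) (at z) \<and> d \<le> 0"
      using deriv[of z] has_real_derivative_at_if_within_atLeast by fastforce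
  next
    show "continuous_on {x..y} g"
      by (rule continuous_on_subset[OF \<open>continuous_on {a..} g\<close>]) (use \<open>x \<in> {a..}\<close> in auto)
  qed
qed

lemma IVT_decreasing_open:
  fixes g :: "real \<Rightarrow> real"
  assumes "a \<le> b" "continuous_on {a..b} g" "g b < c" "c < g a"
  shows "\<exists>x. a < x \<and> x < b \<and> g x = c"
proof -
  obtain x where "a \<le> x" "x \<le> b" "g x = c"
    using IVT2'[of g b c a] assms by auto
  moreover have "x \<noteq> a" "x \<noteq> b" using \<open>g x = c\<close> assms by auto
  ultimately show ?thesis by force
qed

lemma C2_on_imp_continuous_on: "C2_on g A \<Longrightarrow> continuous_on A g"
  unfolding C2_on_def continuous_on_eq_continuous_within
  by (blast intro: has_derivative_continuous)

locale incidence =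
  fixes F f :: "real \<Rightarrow> real \<Rightarrow> real"
  assumes hyps: "incidence_hyps F f"
begin

lemma F_eq: "0 \<le> S \<Longrightarrow> 0 \<le> I \<Longrightarrow> F S I = I * f S I"
  using hyps unfolding incidence_hyps_def by (elim conjE) simp

lemma F_at_0: "0 \<le> S \<Longrightarrow> F S 0 = 0"
  using hyps unfolding incidence_hyps_def by (elim conjE) simp

lemma F_nonneg: "0 \<le> S \<Longrightarrow> 0 \<le> I \<Longrightarrow> 0 \<le> F S I"
  using hyps unfolding incidence_hyps_def by (elim conjE) simp

lemma f_zero_left: "0 < I \<Longrightarrow> f 0 I = 0"
proof -
  assume "0 < I"
  have "\<forall>I\<ge>0. F 0 I = 0" using hyps unfolding incidence_hyps_def by (elim conjE) assumption
  then show ?thesis using F_eq[of 0 I] \<open>0 < I\<close> by simp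
qed

lemma f_less_S: "0 \<le> S \<Longrightarrow> S < S' \<Longrightarrow> 0 \<le> I \<Longrightarrow> f S I < f S' I"
proof -
  assume "0 \<le> S" "S < S'" "0 \<le> I"
  have "\<forall>S\<ge>0. \<exists>d>0. ((\<lambda>s. f s I) has_real_derivative d) (at S within {0..})"
    using hyps \<open>0 \<le> I\<close> unfolding incidence_hyps_def by (elim conjE) simp
  then have "strict_mono_on {0..} (\<lambda>s. f s I)"
    by (intro strict_mono_on_atLeast_if_deriv_pos) simp
  then show ?thesis using \<open>0 \<le> S\<close> \<open>S < S'\<close> by (simp add: monotone_on_def)
qed

lemma f_le_S: "0 \<le> S \<Longrightarrow> S \<le> S' \<Longrightarrow> 0 \<le> I \<Longrightarrow> f S I \<le> f S' I"
  using f_less_S[of S S' I] by (cases "S = S'") auto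

lemma f_le_I: "0 \<le> S \<Longrightarrow> 0 \<le> I \<Longrightarrow> I \<le> I' \<Longrightarrow> f S I' \<le> f S I"
proof -
  assume "0 \<le> S" "0 \<le> I" "I \<le> I'"
  have "\<forall>I\<ge>0. \<exists>d\<le>0. ((\<lambda>i. f S i) has_real_derivative d) (at I within {0..})"
    using hyps \<open>0 \<le> S\<close> unfolding incidence_hyps_def by (elim conjE) simp
  then have "antimono_on {0..} (f S)"
    by (intro antimono_on_atLeast_if_deriv_nonpos) simp
  then show ?thesis using \<open>0 \<le> I\<close> \<open>I \<le> I'\<close> by (simp add: monotone_on_def)
qed

lemma continuous_on_f_comp:
  assumes "continuous_on A p" "\<And>x. x \<in> A \<Longrightarrow> 0 \<le> p x \<and> 0 \<le> x"
  shows "continuous_on A (\<lambda>x. f (p x) x)"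
proof -
  have "continuous_on quadrant (\<lambda>q. f (fst q) (snd q))"
    using hyps C2_on_imp_continuous_on unfolding incidence_hyps_def by (elim conjE) simp
  moreover have "continuous_on A (\<lambda>x. (p x, x))"
    by (intro continuous_intros assms(1))
  moreover have "(\<lambda>x. (p x, x)) ` A \<subseteq> quadrant"
    using assms(2) by (auto simp: quadrant_def)
  ultimately show ?thesis using continuous_on_compose2 by fastforce
qed

lemma deriv_at_I_0_eq_f:
  assumes "0 \<le> S" and deriv: "((\<lambda>I. F S I) has_real_derivative \<sigma>) (at 0 within {0..})"
  shows "\<sigma> = f S 0"
proof -
  have "((\<lambda>I. (F S I - F S 0) / (I - 0)) \<longlongrightarrow> \<sigma>) (at_right 0)"
    using deriv unfolding has_field_derivative_iff by (rule tendsto_within_subset) auto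
  moreover have "\<forall>\<^sub>F I in at_right 0. (F S I - F S 0) / (I - 0) = f S I"
    using eventually_at_right_less[of 0]
    by eventually_elim (use F_eq F_at_0 \<open>0 \<le> S\<close> in auto)
  ultimately have "((\<lambda>I. f S I) \<longlongrightarrow> \<sigma>) (at_right 0)"
    using tendsto_cong by fastforce
  moreover have "continuous_on {0..} (\<lambda>I. f S I)"
    by (rule continuous_on_f_comp) (use \<open>0 \<le> S\<close> in auto)
  then have "((\<lambda>I. f S I) \<longlongrightarrow> f S 0) (at 0 within {0..})"
    by (simp add: continuous_on_def)
  then have "((\<lambda>I. f S I) \<longlongrightarrow> f S 0) (at_right 0)"
    by (simp add: at_within_Ici_at_right)
  ultimately show ?thesis
    using tendsto_unique[OF trivial_limit_at_right_real] by blast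
qed

end

locale two_strain_model = inc1: incidence F1 f1 + inc2: incidence F2 f2
  for F1 f1 F2 f2 :: "real \<Rightarrow> real \<Rightarrow> real" +
  fixes \<Lambda> \<mu> r k \<gamma>1 \<gamma>2 v1 v2 :: real
  assumes \<Lambda>_pos: "0 < \<Lambda>" and \<mu>_pos: "0 < \<mu>" and r_pos: "0 < r" and k_pos: "0 < k"
    and \<alpha>1_pos: "0 < \<gamma>1 + v1 + \<mu>" and \<alpha>2_pos: "0 < \<gamma>2 + v2 + \<mu>"
begin

abbreviation "\<alpha>1 \<equiv> \<gamma>1 + v1 + \<mu>"
abbreviation "\<alpha>2 \<equiv> \<gamma>2 + v2 + \<mu>"
abbreviation "S0 \<equiv> \<Lambda> / (r + \<mu>)"
abbreviation "E1 \<equiv> E1_equilibrium \<Lambda> \<mu> r k \<gamma>1 \<gamma>2 v1 v2 F1 F2"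
abbreviation "E2 \<equiv> E2_equilibrium \<Lambda> \<mu> r k \<gamma>1 \<gamma>2 v1 v2 F1 F2"

definition S1 :: "real \<Rightarrow> real" where
  "S1 I = (\<Lambda> - \<alpha>1 * I) / (r + \<mu>)"

definition G1 :: "real \<Rightarrow> real" where
  "G1 I = f1 (S1 I) I"

lemma E1_equilibrium_iff:
  "E1 S V I \<longleftrightarrow> 0 < I \<and> \<alpha>1 * I < \<Lambda> \<and> S = S1 I \<and> V = r * S / \<mu> \<and> G1 I = \<alpha>1"
proof
  assume E: "E1 S V I"
  then have pos: "0 < S" "0 < V" "0 < I" by (auto simp: E1_equilibrium_def)
  with E inc2.F_at_0 have balance: "\<Lambda> - F1 S I - (r + \<mu>) * S = 0" "r * S - \<mu> * V = 0"
    and incidence: "F1 S I - \<alpha>1 * I = 0"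
    by (simp_all add: E1_equilibrium_def equilibrium_def)
  have lin: "(r + \<mu>) * S = \<Lambda> - \<alpha>1 * I" using balance(1) incidence by linarith
  have "f1 S I = \<alpha>1" using incidence inc1.F_eq[of S I] pos by simp
  moreover have "S1 I = S" unfolding S1_def lin[symmetric] using r_pos \<mu>_pos by simp
  moreover have "V = r * S / \<mu>" using balance(2) \<mu>_pos by (simp add: eq_divide_eq)
  moreover have "0 < (r + \<mu>) * S" using pos r_pos \<mu>_pos by simp
  ultimately show "0 < I \<and> \<alpha>1 * I < \<Lambda> \<and> S = S1 I \<and> V = r * S / \<mu> \<and> G1 I = \<alpha>1"
    using pos lin by (simp add: G1_def)
next
  assume "0 < I \<and> \<alpha>1 * I < \<Lambda> \<and> S = S1 I \<and> V = r * S / \<mu> \<and> G1 I = \<alpha>1"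
  then have I: "0 < I" "\<alpha>1 * I < \<Lambda>" and S: "S = S1 I" and V: "V = r * S / \<mu>"
    and f: "f1 S I = \<alpha>1" by (auto simp: G1_def)
  have "0 < S" using I r_pos \<mu>_pos by (simp add: S S1_def)
  then have "0 < V" using V r_pos \<mu>_pos by simp
  have "F1 S I = \<alpha>1 * I" using inc1.F_eq[of S I] f I \<open>0 < S\<close> by simp
  moreover have "(r + \<mu>) * S = \<Lambda> - \<alpha>1 * I" using S r_pos \<mu>_pos by (simp add: S1_def)
  moreover have "\<mu> * V = r * S" using V \<mu>_pos by simp
  ultimately show "E1 S V I"
    using I \<open>0 < S\<close> \<open>0 < V\<close> inc2.F_at_0[of S]
    by (simp add: E1_equilibrium_def equilibrium_def)
qed

lemma G1_less:
  assumes "0 \<le> I" "I < I'" "\<alpha>1 * I' \<le> \<Lambda>"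
  shows "G1 I' < G1 I"
proof -
  have "0 \<le> S1 I'" "S1 I' < S1 I"
    using assms \<alpha>1_pos r_pos \<mu>_pos by (auto simp: S1_def divide_strict_right_mono)
  then have "f1 (S1 I') I' \<le> f1 (S1 I') I" "f1 (S1 I') I < f1 (S1 I) I"
    using assms inc1.f_le_I inc1.f_less_S by auto
  then show ?thesis by (simp add: G1_def)
qed

lemma continuous_on_G1: "continuous_on {0..\<Lambda> / \<alpha>1} G1"
  unfolding G1_def S1_def
  by (rule inc1.continuous_on_f_comp)
     (use \<alpha>1_pos r_pos \<mu>_pos in \<open>auto intro!: continuous_intros simp: field_simps\<close>)

lemma E1_exists_iff: "(\<exists>S V I. E1 S V I) \<longleftrightarrow> \<alpha>1 < f1 S0 0"
proof
  assume "\<exists>S V I. E1 S V I"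
  then obtain I where "0 < I" "\<alpha>1 * I < \<Lambda>" "G1 I = \<alpha>1" by (auto simp: E1_equilibrium_iff)
  then have "\<alpha>1 < G1 0" using G1_less[of 0 I] by simp
  then show "\<alpha>1 < f1 S0 0" by (simp add: G1_def S1_def)
next
  assume "\<alpha>1 < f1 S0 0"
  moreover have "G1 (\<Lambda> / \<alpha>1) = 0"
    using inc1.f_zero_left \<alpha>1_pos \<Lambda>_pos by (simp add: G1_def S1_def)
  ultimately obtain I where "0 < I" "I < \<Lambda> / \<alpha>1" "G1 I = \<alpha>1"
    using IVT_decreasing_open[OF _ continuous_on_G1, of \<alpha>1] \<alpha>1_pos \<Lambda>_pos
    by (auto simp: G1_def S1_def)
  then have "E1 (S1 I) (r * S1 I / \<mu>) I"
    using \<alpha>1_pos by (simp add: E1_equilibrium_iff field_simps)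
  then show "\<exists>S V I. E1 S V I" by blast
qed

lemma E1_unique:
  assumes "E1 S V I" "E1 S' V' I'"
  shows "(S, V, I) = (S', V', I')"
proof -
  have "I = I'"
  proof (rule linorder_cases[of I I'])
    assume "I < I'"
    then show ?thesis using assms G1_less[of I I'] by (auto simp: E1_equilibrium_iff)
  next
    assume "I' < I"
    then show ?thesis using assms G1_less[of I' I] by (auto simp: E1_equilibrium_iff)
  qed
  then show ?thesis using assms by (simp add: E1_equilibrium_iff)
qed

definition S2 :: "real \<Rightarrow> real" where
  "S2 I = (\<Lambda> - \<alpha>2 * I) * (\<mu> + k * I) / (\<mu> * (r + \<mu> + k * I))"

definition G2 :: "real \<Rightarrow> real" where
  "G2 I = f2 (S2 I) I + k * (r * S2 I / (\<mu> + k * I))"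

definition past_S2_peak :: "real \<Rightarrow> bool" where
  "past_S2_peak I \<longleftrightarrow> r * (k * \<Lambda> + \<alpha>2 * (r + \<mu>)) \<le> \<alpha>2 * (r + \<mu> + k * I)^2"

lemma S2_pos_iff:
  assumes "0 \<le> I"
  shows "0 < S2 I \<longleftrightarrow> \<alpha>2 * I < \<Lambda>"
proof -
  have "0 < \<mu> + k * I" "0 < \<mu> * (r + \<mu> + k * I)"
    using assms \<mu>_pos r_pos k_pos by (simp_all add: add_pos_nonneg)
  then have "0 < S2 I \<longleftrightarrow> 0 < (\<Lambda> - \<alpha>2 * I) * (\<mu> + k * I)"
    by (simp add: S2_def pos_less_divide_eq)
  also have "\<dots> \<longleftrightarrow> \<alpha>2 * I < \<Lambda>"
    using \<open>0 < \<mu> + k * I\<close> by (auto simp: zero_less_mult_iff)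
  finally show ?thesis .
qed

lemma S2_nonneg: "0 \<le> I \<Longrightarrow> \<alpha>2 * I \<le> \<Lambda> \<Longrightarrow> 0 \<le> S2 I"
  using \<mu>_pos r_pos k_pos by (simp add: S2_def add_pos_nonneg)

lemma balance_iff_S2:
  assumes "0 \<le> I" "V = r * S / (\<mu> + k * I)"
  shows "\<Lambda> - I * (\<alpha>2 - k * V) - (r + \<mu>) * S = 0 \<longleftrightarrow> S = S2 I"
proof -
  have pos: "0 < \<mu> + k * I" "0 < \<mu> * (r + \<mu> + k * I)"
    using assms(1) \<mu>_pos r_pos k_pos by (auto simp: add_pos_nonneg)
  have "(\<Lambda> - I * (\<alpha>2 - k * V) - (r + \<mu>) * S) * (\<mu> + k * I)
        = (\<Lambda> - \<alpha>2 * I) * (\<mu> + k * I) - S * (\<mu> * (r + \<mu> + k * I))"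
    using pos by (simp add: assms(2) field_simps)
  also have "\<dots> = 0 \<longleftrightarrow> S = S2 I"
    using pos by (auto simp: S2_def field_simps)
  finally show ?thesis using pos by simp
qed

lemma E2_equilibrium_iff:
  "E2 S V I \<longleftrightarrow>
     0 < I \<and> \<alpha>2 * I < \<Lambda> \<and> S = S2 I \<and> V = r * S / (\<mu> + k * I) \<and> G2 I = \<alpha>2"
proof
  assume E: "E2 S V I"
  then have pos: "0 < S" "0 < V" "0 < I" by (auto simp: E2_equilibrium_def)
  then have den: "0 < \<mu> + k * I" using \<mu>_pos k_pos by (simp add: add_pos_pos)
  from E pos inc1.F_at_0 have balance: "\<Lambda> - F2 S I - (r + \<mu>) * S = 0"
    and V_eq: "r * S - (\<mu> + k * I) * V = 0" and incidence: "F2 S I + k * I * V - \<alpha>2 * I = 0"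
    by (simp_all add: E2_equilibrium_def equilibrium_def)
  have "I * (f2 S I - (\<alpha>2 - k * V)) = 0"
    using incidence inc2.F_eq[of S I] pos by (simp add: algebra_simps)
  then have f: "f2 S I = \<alpha>2 - k * V" using pos by simp
  have V: "V = r * S / (\<mu> + k * I)" using V_eq den by (simp add: eq_divide_eq)
  have "F2 S I = I * (\<alpha>2 - k * V)" using inc2.F_eq[of S I] pos f by simp
  then have "S = S2 I" using balance balance_iff_S2[OF _ V] pos by simp
  then show "0 < I \<and> \<alpha>2 * I < \<Lambda> \<and> S = S2 I \<and> V = r * S / (\<mu> + k * I) \<and> G2 I = \<alpha>2"
    using pos S2_pos_iff[of I] f V by (simp add: G2_def)
next
  assume "0 < I \<and> \<alpha>2 * I < \<Lambda> \<and> S = S2 I \<and> V = r * S / (\<mu> + k * I) \<and> G2 I = \<alpha>2"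
  then have I: "0 < I" "\<alpha>2 * I < \<Lambda>" and S: "S = S2 I" and V: "V = r * S / (\<mu> + k * I)"
    and f: "f2 S I = \<alpha>2 - k * V" by (auto simp: G2_def)
  have den: "0 < \<mu> + k * I" using I \<mu>_pos k_pos by (simp add: add_pos_pos)
  have "0 < S" using S2_pos_iff I by (simp add: S)
  then have "0 < V" using V den r_pos by simp
  have F: "F2 S I = I * (\<alpha>2 - k * V)" using inc2.F_eq[of S I] f I \<open>0 < S\<close> by simp
  have "\<Lambda> - F2 S I - (r + \<mu>) * S = 0" using balance_iff_S2[OF _ V] I S F by simp
  moreover have "r * S - (\<mu> + k * I) * V = 0" using V den by simp
  moreover have "F2 S I + k * I * V - \<alpha>2 * I = 0" using F by (simp add: algebra_simps)
  ultimately show "E2 S V I"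
    using \<open>0 < S\<close> \<open>0 < V\<close> I inc1.F_at_0[of S]
    by (simp add: E2_equilibrium_def equilibrium_def)
qed

lemma E2_S_le_S0: "E2 S V I \<Longrightarrow> S \<le> S0"
  using inc1.F_at_0 inc2.F_nonneg r_pos \<mu>_pos
  by (auto simp: E2_equilibrium_def equilibrium_def field_simps)

lemma S2_diff:
  assumes "0 \<le> I" "0 \<le> I'"
  shows "S2 I - S2 I' = (I' - I)
           * (\<alpha>2 * (r + \<mu> + k * I) * (r + \<mu> + k * I') - r * (k * \<Lambda> + \<alpha>2 * (r + \<mu>)))
           / (\<mu> * (r + \<mu> + k * I) * (r + \<mu> + k * I'))"
proof -
  define z z' where "z = r + \<mu> + k * I" and "z' = r + \<mu> + k * I'"
  have "0 < z" "0 < z'"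
    using assms \<mu>_pos r_pos k_pos by (auto simp: z_def z'_def add_pos_nonneg)
  then have S2: "S2 I * (\<mu> * z) = (\<Lambda> - \<alpha>2 * I) * (\<mu> + k * I)"
    "S2 I' * (\<mu> * z') = (\<Lambda> - \<alpha>2 * I') * (\<mu> + k * I')"
    using \<mu>_pos by (simp_all add: S2_def z_def z'_def)
  have "(S2 I - S2 I') * (\<mu> * z * z') = S2 I * (\<mu> * z) * z' - S2 I' * (\<mu> * z') * z"
    by (simp add: algebra_simps)
  also have "\<dots> = (\<Lambda> - \<alpha>2 * I) * (\<mu> + k * I) * z' - (\<Lambda> - \<alpha>2 * I') * (\<mu> + k * I') * z"
    by (simp only: S2)
  also have "\<dots> = (I' - I) * (\<alpha>2 * z * z' - r * (k * \<Lambda> + \<alpha>2 * (r + \<mu>)))"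
    by (simp add: z_def z'_def algebra_simps)
  finally show ?thesis
    using \<open>0 < z\<close> \<open>0 < z'\<close> \<mu>_pos by (simp add: eq_divide_eq z_def z'_def)
qed

lemma S2_antitone:
  assumes "0 \<le> I" "I \<le> I'" and peak: "past_S2_peak I"
  shows "S2 I' \<le> S2 I"
proof -
  have z: "0 < r + \<mu> + k * I" "r + \<mu> + k * I \<le> r + \<mu> + k * I'"
    using assms \<mu>_pos r_pos k_pos by (auto simp: add_pos_nonneg)
  have "\<alpha>2 * (r + \<mu> + k * I)^2 \<le> \<alpha>2 * (r + \<mu> + k * I) * (r + \<mu> + k * I')"
    using z \<alpha>2_pos by (simp add: power2_eq_square)
  then have "0 \<le> (I' - I)
           * (\<alpha>2 * (r + \<mu> + k * I) * (r + \<mu> + k * I') - r * (k * \<Lambda> + \<alpha>2 * (r + \<mu>)))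
           / (\<mu> * (r + \<mu> + k * I) * (r + \<mu> + k * I'))"
    using peak z assms(2) \<mu>_pos by (simp add: past_S2_peak_def)
  then show ?thesis using S2_diff[of I I'] assms by simp
qed

lemma G2_less:
  assumes "0 \<le> I" "I < I'" "\<alpha>2 * I' \<le> \<Lambda>"
    and peak: "past_S2_peak I"
  shows "G2 I' < G2 I"
proof -
  have "0 \<le> I'" using assms(1,2) by simp
  have "\<alpha>2 * I < \<alpha>2 * I'" using assms(2) \<alpha>2_pos by simp
  then have "\<alpha>2 * I < \<Lambda>" using assms(3) by simp
  have S: "S2 I' \<le> S2 I" "0 \<le> S2 I'" "0 < S2 I"
    using S2_antitone[OF assms(1) _ peak] S2_nonneg[OF \<open>0 \<le> I'\<close> assms(3)]
      S2_pos_iff[OF assms(1)] \<open>\<alpha>2 * I < \<Lambda>\<close> assms(2) by simp_all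
  then have "f2 (S2 I') I' \<le> f2 (S2 I') I" "f2 (S2 I') I \<le> f2 (S2 I) I"
    using inc2.f_le_I[of "S2 I'" I I'] inc2.f_le_S[of "S2 I'" "S2 I" I] assms(1,2) by simp_all
  moreover have "S2 I' / (\<mu> + k * I') < S2 I / (\<mu> + k * I)"
  proof -
    have "0 < \<mu> + k * I" "\<mu> + k * I < \<mu> + k * I'"
      using assms(1,2) \<mu>_pos k_pos by (simp_all add: add_pos_nonneg)
    then have "S2 I' / (\<mu> + k * I') \<le> S2 I / (\<mu> + k * I')"
      "S2 I / (\<mu> + k * I') < S2 I / (\<mu> + k * I)"
      using S by (simp_all add: divide_right_mono divide_strict_left_mono)
    then show ?thesis by linarith
  qed
  then have "k * r * (S2 I' / (\<mu> + k * I')) < k * r * (S2 I / (\<mu> + k * I))"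
    using r_pos k_pos by (intro mult_strict_left_mono) simp_all
  then have "k * (r * S2 I' / (\<mu> + k * I')) < k * (r * S2 I / (\<mu> + k * I))"
    by (simp only: times_divide_eq_right mult.assoc)
  ultimately show ?thesis unfolding G2_def by linarith
qed

lemma continuous_on_G2: "continuous_on {0..\<Lambda> / \<alpha>2} G2"
proof -
  have den: "\<mu> + k * I \<noteq> 0" "\<mu> * (r + \<mu> + k * I) \<noteq> 0" if "I \<in> {0..\<Lambda> / \<alpha>2}" for I
  proof -
    have "0 < \<mu> + k * I" "0 < \<mu> * (r + \<mu> + k * I)"
      using that \<mu>_pos r_pos k_pos by (simp_all add: add_pos_nonneg)
    then show "\<mu> + k * I \<noteq> 0" "\<mu> * (r + \<mu> + k * I) \<noteq> 0" by linarith+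
  qed
  have S2: "continuous_on {0..\<Lambda> / \<alpha>2} S2"
    unfolding S2_def by (intro continuous_intros ballI den)
  have "continuous_on {0..\<Lambda> / \<alpha>2} (\<lambda>I. f2 (S2 I) I)"
    by (rule inc2.continuous_on_f_comp[OF S2]) (use S2_nonneg \<alpha>2_pos in \<open>auto simp: field_simps\<close>)
  then show ?thesis
    unfolding G2_def by (intro continuous_intros S2 ballI den)
qed

lemma E2_exists_iff: "(\<exists>S V I. E2 S V I) \<longleftrightarrow> \<alpha>2 < f2 S0 0 + k * (r * S0 / \<mu>)"
proof
  assume "\<exists>S V I. E2 S V I"
  then obtain S V I where E: "E2 S V I" by blast
  then have I: "0 < I" and S: "0 < S" "S \<le> S0" and V: "V = r * S / (\<mu> + k * I)"
    and G: "f2 S I + k * V = \<alpha>2"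
    using E2_S_le_S0 S2_pos_iff by (auto simp: E2_equilibrium_iff G2_def)
  have "f2 S I \<le> f2 S0 0"
    using inc2.f_le_I[of S 0 I] inc2.f_le_S[of S S0 0] I S by simp
  moreover have "k * V < k * (r * S0 / \<mu>)"
  proof (rule mult_strict_left_mono[OF _ k_pos])
    have "V < r * S / \<mu>"
      unfolding V using I S r_pos \<mu>_pos k_pos
      by (intro divide_strict_left_mono) (simp_all add: add_pos_pos)
    also have "\<dots> \<le> r * S0 / \<mu>"
      using S r_pos \<mu>_pos by (intro divide_right_mono mult_left_mono) simp_all
    finally show "V < r * S0 / \<mu>" .
  qed
  ultimately show "\<alpha>2 < f2 S0 0 + k * (r * S0 / \<mu>)" using G by linarith
next
  assume "\<alpha>2 < f2 S0 0 + k * (r * S0 / \<mu>)"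
  moreover have "S2 0 = S0" using \<mu>_pos by (simp add: S2_def)
  moreover have "S2 (\<Lambda> / \<alpha>2) = 0" using \<alpha>2_pos by (simp add: S2_def)
  ultimately obtain I where "0 < I" "I < \<Lambda> / \<alpha>2" "G2 I = \<alpha>2"
    using IVT_decreasing_open[OF _ continuous_on_G2, of \<alpha>2] inc2.f_zero_left \<alpha>2_pos \<Lambda>_pos
    by (auto simp: G2_def)
  then have "E2 (S2 I) (r * S2 I / (\<mu> + k * I)) I"
    using \<alpha>2_pos by (simp add: E2_equilibrium_iff field_simps)
  then show "\<exists>S V I. E2 S V I" by blast
qed

lemma E2_unique:
  assumes "E2 S V I" "E2 S' V' I'"
    and "past_S2_peak I"
    and "past_S2_peak I'"
  shows "(S, V, I) = (S', V', I')"
proof -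
  have "I = I'"
  proof (rule linorder_cases[of I I'])
    assume "I < I'"
    then show ?thesis using assms G2_less[of I I'] by (auto simp: E2_equilibrium_iff)
  next
    assume "I' < I"
    then show ?thesis using assms G2_less[of I' I] by (auto simp: E2_equilibrium_iff)
  qed
  then show ?thesis using assms by (simp add: E2_equilibrium_iff)
qed

lemma past_S2_peak_if_nonneg:
  assumes "- \<alpha>2 * r * \<mu> - \<alpha>2 * \<mu>^2 + k * \<Lambda> * r < 0" "0 \<le> I"
  shows "past_S2_peak I"
proof -
  have "(r + \<mu>)^2 \<le> (r + \<mu> + k * I)^2"
    using assms(2) r_pos \<mu>_pos k_pos by (intro power_mono) auto
  then have "\<alpha>2 * (r + \<mu>)^2 \<le> \<alpha>2 * (r + \<mu> + k * I)^2"
    using \<alpha>2_pos by simp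
  moreover have "r * (k * \<Lambda> + \<alpha>2 * (r + \<mu>)) < \<alpha>2 * (r + \<mu>)^2"
    using assms(1) by (simp add: power2_eq_square algebra_simps)
  ultimately show ?thesis unfolding past_S2_peak_def by linarith
qed

lemma past_S2_peak_if_ge:
  assumes "(- r * \<alpha>2 - \<alpha>2 * \<mu> + sqrt (r * \<alpha>2 * (r * \<alpha>2 + \<alpha>2 * \<mu> + k * \<Lambda>))) / (\<alpha>2 * k) \<le> I"
  shows "past_S2_peak I"
proof -
  define q where "q = r * \<alpha>2 * (r * \<alpha>2 + \<alpha>2 * \<mu> + k * \<Lambda>)"
  have "- r * \<alpha>2 - \<alpha>2 * \<mu> + sqrt q \<le> I * (\<alpha>2 * k)"
    using assms \<alpha>2_pos k_pos by (simp add: q_def pos_divide_le_eq)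
  then have "sqrt q \<le> \<alpha>2 * (r + \<mu> + k * I)"
    by (simp add: algebra_simps)
  then have "q \<le> (\<alpha>2 * (r + \<mu> + k * I))^2"
    by (rule sqrt_le_D)
  moreover have "q = \<alpha>2 * (r * (k * \<Lambda> + \<alpha>2 * (r + \<mu>)))"
    by (simp add: q_def algebra_simps)
  moreover have "(\<alpha>2 * (r + \<mu> + k * I))^2 = \<alpha>2 * (\<alpha>2 * (r + \<mu> + k * I)^2)"
    by (simp add: power2_eq_square mult_ac)
  ultimately show ?thesis
    using \<alpha>2_pos by (simp add: past_S2_peak_def)
qed

end
theorem mainTheorem4:
  fixes \<Lambda> \<mu> r k \<gamma>1 \<gamma>2 v1 v2 \<sigma>1 \<sigma>2 :: real
    and F1 f1 F2 f2 :: "real \<Rightarrow> real \<Rightarrow> real"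
  assumes pos: "\<Lambda> > 0" "\<mu> > 0" "r > 0" "k > 0" "\<gamma>1 > 0" "\<gamma>2 > 0"
    and vnn: "v1 \<ge> 0" "v2 \<ge> 0"
    and H1: "incidence_hyps F1 f1"
    and H2: "incidence_hyps F2 f2"
    and sigma1: "((\<lambda>I. F1 (\<Lambda> / (r + \<mu>)) I) has_real_derivative \<sigma>1) (at 0 within {0..})"
    and sigma2: "((\<lambda>I. F2 (\<Lambda> / (r + \<mu>)) I) has_real_derivative \<sigma>2) (at 0 within {0..})"
  shows
    "((\<exists>S V I1. E1_equilibrium \<Lambda> \<mu> r k \<gamma>1 \<gamma>2 v1 v2 F1 F2 S V I1)
        \<longleftrightarrow> \<sigma>1 / (\<gamma>1 + v1 + \<mu>) > 1)
     \<and> (\<forall>S V I1 S' V' I1'.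
          E1_equilibrium \<Lambda> \<mu> r k \<gamma>1 \<gamma>2 v1 v2 F1 F2 S V I1 \<longrightarrow>
          E1_equilibrium \<Lambda> \<mu> r k \<gamma>1 \<gamma>2 v1 v2 F1 F2 S' V' I1' \<longrightarrow>
          (S, V, I1) = (S', V', I1'))
     \<and> ((\<exists>S V I2. E2_equilibrium \<Lambda> \<mu> r k \<gamma>1 \<gamma>2 v1 v2 F1 F2 S V I2)
        \<longleftrightarrow> \<sigma>2 / (\<gamma>2 + v2 + \<mu>)
              + k * r * \<Lambda> / ((\<gamma>2 + v2 + \<mu>) * \<mu> * (r + \<mu>)) > 1)
     \<and> (- (\<gamma>2 + v2 + \<mu>) * r * \<mu> - (\<gamma>2 + v2 + \<mu>) * \<mu>^2 + k * \<Lambda> * r < 0 \<longrightarrow>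
          (\<forall>S V I2 S' V' I2'.
             E2_equilibrium \<Lambda> \<mu> r k \<gamma>1 \<gamma>2 v1 v2 F1 F2 S V I2 \<longrightarrow>
             E2_equilibrium \<Lambda> \<mu> r k \<gamma>1 \<gamma>2 v1 v2 F1 F2 S' V' I2' \<longrightarrow>
             (S, V, I2) = (S', V', I2')))
     \<and> (- (\<gamma>2 + v2 + \<mu>) * r * \<mu> - (\<gamma>2 + v2 + \<mu>) * \<mu>^2 + k * \<Lambda> * r > 0 \<longrightarrow>
          (\<forall>S V I2 S' V' I2'.
             E2_equilibrium \<Lambda> \<mu> r k \<gamma>1 \<gamma>2 v1 v2 F1 F2 S V I2 \<longrightarrow>
             E2_equilibrium \<Lambda> \<mu> r k \<gamma>1 \<gamma>2 v1 v2 F1 F2 S' V' I2' \<longrightarrow>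
             I2 \<in> {(- r * (\<gamma>2 + v2 + \<mu>) - (\<gamma>2 + v2 + \<mu>) * \<mu>
                     + sqrt (r * (\<gamma>2 + v2 + \<mu>) * (r * (\<gamma>2 + v2 + \<mu>) + (\<gamma>2 + v2 + \<mu>) * \<mu> + k * \<Lambda>)))
                    / ((\<gamma>2 + v2 + \<mu>) * k) .. \<Lambda> / (\<gamma>2 + v2 + \<mu>)} \<longrightarrow>
             I2' \<in> {(- r * (\<gamma>2 + v2 + \<mu>) - (\<gamma>2 + v2 + \<mu>) * \<mu>
                     + sqrt (r * (\<gamma>2 + v2 + \<mu>) * (r * (\<gamma>2 + v2 + \<mu>) + (\<gamma>2 + v2 + \<mu>) * \<mu> + k * \<Lambda>)))
                    / ((\<gamma>2 + v2 + \<mu>) * k) .. \<Lambda> / (\<gamma>2 + v2 + \<mu>)} \<longrightarrow>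
             (S, V, I2) = (S', V', I2')))"
proof -
  interpret two_strain_model F1 f1 F2 f2 \<Lambda> \<mu> r k \<gamma>1 \<gamma>2 v1 v2
    by unfold_locales (use pos vnn H1 H2 in simp_all)
  have \<sigma>: "\<sigma>1 = f1 S0 0" "\<sigma>2 = f2 S0 0"
    using inc1.deriv_at_I_0_eq_f[OF _ sigma1] inc2.deriv_at_I_0_eq_f[OF _ sigma2] pos by simp_all
  have \<R>1: "\<sigma>1 / \<alpha>1 > 1 \<longleftrightarrow> \<alpha>1 < \<sigma>1"
    using \<alpha>1_pos by (simp add: less_divide_eq_1_pos)
  have "\<sigma>2 / \<alpha>2 + k * r * \<Lambda> / (\<alpha>2 * \<mu> * (r + \<mu>)) = (\<sigma>2 + k * (r * S0 / \<mu>)) / \<alpha>2"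
    by (simp add: add_divide_distrib mult_ac)
  then have \<R>2: "\<sigma>2 / \<alpha>2 + k * r * \<Lambda> / (\<alpha>2 * \<mu> * (r + \<mu>)) > 1
                 \<longleftrightarrow> \<alpha>2 < \<sigma>2 + k * (r * S0 / \<mu>)"
    using \<alpha>2_pos by (simp add: less_divide_eq_1_pos)
  have unique_a: "(S, V, I) = (S', V', I')"
    if "E2 S V I" "E2 S' V' I'" "- \<alpha>2 * r * \<mu> - \<alpha>2 * \<mu>^2 + k * \<Lambda> * r < 0" for S V I S' V' I'
  proof -
    have "0 \<le> I" "0 \<le> I'" using that(1,2) by (simp_all add: E2_equilibrium_iff)
    with that show ?thesis by (intro E2_unique past_S2_peak_if_nonneg) simp_all
  qed
  show ?thesis
    using \<sigma> \<R>1 \<R>2 E1_exists_iff E1_unique E2_exists_iff unique_a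
      E2_unique[OF _ _ past_S2_peak_if_ge past_S2_peak_if_ge]
    by auto
qed

end
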